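(* Let $G$ be the mixed graph on nodes $\{a,b,c,d\}$ with directed edges $a\to b$, $a\to c$, $a\to d$ and bidirected edges $a\leftrightarrow b$, $a\leftrightarrow c$, $a\leftrightarrow d$ (and no other edges). Then every $\Sigma\in\mathcal M(G)$ satisfies $$\rho_{bc.a}\cdot\rho_{cd.a}\cdot\rho_{bd.a}\le 0.$$ Moreover, there is a nonempty open subset of the set of positive definite $4\times4$ matrices (e.g. a neighbourhood of the matrix with $\sigma_{aa}=\sigma_{bb}=\sigma_{cc}=\sigma_{dd}=1$, $\sigma_{ab}=\sigma_{ac}=\sigma_{ad}=0$, $\sigma_{bc}=\sigma_{bd}=\sigma_{cd}=1/2$) violating this inequality, so $\mathcal M(G)$ differs from the set of all positive definite $4\times 4$ matrices by a set of positive measure.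
   Context: $\mathcal M(G)=\{(I-\Lambda)^{-T}\Omega(I-\Lambda)^{-1}\}$ where $\Lambda$ ranges over real $4\times4$ matrices with $\Lambda_{vw}\neq 0$ only for directed edges $v\to w$, and $\Omega$ over positive definite matrices with $\Omega_{vw}=0$ for distinct $v,w$ not joined by a bidirected edge. For a covariance matrix $\Sigma=(\sigma_{vw})$, the partial correlation is $\rho_{xy.a}=(\sigma_{xy}\sigma_{aa}-\sigma_{xa}\sigma_{ya})/\sqrt{(\sigma_{xx}\sigma_{aa}-\sigma_{xa}^2)(\sigma_{yy}\sigma_{aa}-\sigma_{ya}^2)}$. *)

theory Defs
  imports "HOL-Analysis.Analysis"
begin

datatype node = na | nb | nc | nd

lemma UNIV_node: "(UNIV :: node set) = {na, nb, nc, nd}"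
  using node.exhaust by auto

instance node :: finite
  by standard (simp add: UNIV_node)

type_synonym mat4 = "real ^ node ^ node"

definition pos_def :: "mat4 \<Rightarrow> bool" where
  "pos_def M \<longleftrightarrow> transpose M = M \<and> (\<forall>x :: real ^ node. x \<noteq> 0 \<longrightarrow> x \<bullet> (M *v x) > 0)"

definition dir_edge :: "node \<Rightarrow> node \<Rightarrow> bool" where
  "dir_edge v w \<longleftrightarrow> v = na \<and> w \<in> {nb, nc, nd}"

definition bi_edge :: "node \<Rightarrow> node \<Rightarrow> bool" where
  "bi_edge v w \<longleftrightarrow> (v = na \<and> w \<in> {nb, nc, nd}) \<or> (w = na \<and> v \<in> {nb, nc, nd})"

definition model_G :: "mat4 set" where
  "model_G = {transpose (matrix_inv (mat 1 - L)) ** Om ** matrix_inv (mat 1 - L) | L Om.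
      (\<forall>v w. \<not> dir_edge v w \<longrightarrow> L $ v $ w = 0) \<and>
      pos_def Om \<and>
      (\<forall>v w. v \<noteq> w \<and> \<not> bi_edge v w \<longrightarrow> Om $ v $ w = 0)}"

definition pcorr :: "mat4 \<Rightarrow> node \<Rightarrow> node \<Rightarrow> node \<Rightarrow> real" where
  "pcorr S x y a =
     (S $ x $ y * S $ a $ a - S $ x $ a * S $ y $ a) /
     sqrt ((S $ x $ x * S $ a $ a - (S $ x $ a)^2) * (S $ y $ y * S $ a $ a - (S $ y $ a)^2))"

definition Sigma0 :: mat4 where
  "Sigma0 = (\<chi> v w. if v = w then 1 else if v = na \<or> w = na then 0 else 1/2)"

end

theory Submission
  imports Defs
begin

text \<open>Every admissible \<open>\<Lambda>\<close> is supported on the row of \<open>a\<close> with zero diagonal, so \<open>\<Lambda>\<^sup>2 = 0\<close>,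
  \<open>(I - \<Lambda>)\<^sup>-\<^sup>1 = I + \<Lambda>\<close>, and \<open>\<Sigma> = (I + \<Lambda>)\<^sup>T \<Omega> (I + \<Lambda>)\<close>. For two children \<open>x, y\<close> of \<open>a\<close>
  with \<open>\<omega>\<^sub>x\<^sub>y = 0\<close> the terms involving \<open>\<Lambda>\<close> cancel in the numerator of \<open>\<rho>\<^sub>x\<^sub>y\<^sub>.\<^sub>a\<close>, leaving
  \<open>-\<omega>\<^sub>x\<^sub>a\<omega>\<^sub>y\<^sub>a\<close>. Hence the product of the three numerators is \<open>-(\<omega>\<^sub>b\<^sub>a\<omega>\<^sub>c\<^sub>a\<omega>\<^sub>d\<^sub>a)\<^sup>2 \<le> 0\<close>,
  while the product of the three denominators is the square root of a square. At \<open>\<Sigma>\<^sub>0\<close> the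
  product of the partial correlations is \<open>1/8 > 0\<close>, and it is continuous there, so a whole
  neighbourhood of \<open>\<Sigma>\<^sub>0\<close> among the positive definite matrices lies outside the model.\<close>

lemma matrix_inv_eqI:
  fixes A B :: "'a::semiring_1 ^ 'n ^ 'n"
  assumes "A ** B = mat 1" "B ** A = mat 1"
  shows "matrix_inv A = B"
proof -
  let ?inv = "\<lambda>A'. A ** A' = mat 1 \<and> A' ** A = mat 1"
  have inv: "?inv (matrix_inv A)"
    unfolding matrix_inv_def by (rule someI[of ?inv B]) (use assms in auto)
  then have "matrix_inv A = (B ** A) ** matrix_inv A"
    using assms by simp
  also have "\<dots> = B"
    using inv by (simp add: matrix_mul_assoc[symmetric])
  finally show ?thesis .
qed

lemma matrix_add_rdistrib:
  fixes A B C :: "'a::semiring_1 ^ 'n ^ 'n"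
  shows "(B + C) ** A = B ** A + C ** A"
  by (simp add: vec_eq_iff matrix_matrix_mult_def sum.distrib distrib_right)

lemma matrix_diff_ldistrib:
  fixes A B C :: "'a::ring_1 ^ 'n ^ 'n"
  shows "A ** (B - C) = A ** B - A ** C"
  by (simp add: vec_eq_iff matrix_matrix_mult_def sum_subtractf right_diff_distrib)

lemma matrix_diff_rdistrib:
  fixes A B C :: "'a::ring_1 ^ 'n ^ 'n"
  shows "(B - C) ** A = B ** A - C ** A"
  by (simp add: vec_eq_iff matrix_matrix_mult_def sum_subtractf left_diff_distrib)

lemma matrix_inv_one_minus_nilpotent:
  fixes L :: "'a::ring_1 ^ 'n ^ 'n"
  assumes "L ** L = 0"
  shows "matrix_inv (mat 1 - L) = mat 1 + L"
proof (rule matrix_inv_eqI)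
  show "(mat 1 - L) ** (mat 1 + L) = mat 1" "(mat 1 + L) ** (mat 1 - L) = mat 1"
    using assms by (simp_all add: matrix_add_ldistrib matrix_add_rdistrib
        matrix_diff_ldistrib matrix_diff_rdistrib)
qed

lemma sum_UNIV_node: "(\<Sum>k\<in>UNIV. f k) = f na + f nb + f nc + f nd"
  by (simp add: UNIV_node add.assoc)

lemma all_node: "(\<forall>x. P x) \<longleftrightarrow> P na \<and> P nb \<and> P nc \<and> P nd"
  by (metis node.exhaust)

lemma matrix_square_zero_if_row_supported:
  fixes L :: "'a::semiring_1 ^ 'n ^ 'n"
  assumes "\<And>v w. v \<noteq> a \<or> w = a \<Longrightarrow> L $ v $ w = 0"
  shows "L ** L = 0"
proof -
  have "L $ i $ k * L $ k $ j = 0" for i j k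
    using assms by (cases "k = a") auto
  then show ?thesis
    by (simp add: vec_eq_iff matrix_matrix_mult_def)
qed

lemma transpose_add: "transpose (A + B) = transpose A + transpose B"
  by (simp add: transpose_def vec_eq_iff)

lemma matrix_mult_row_supported_right:
  fixes A L :: "'a::semiring_1 ^ 'n ^ 'n"
  assumes "\<And>v w. v \<noteq> a \<Longrightarrow> L $ v $ w = 0"
  shows "(A ** L) $ i $ j = A $ i $ a * L $ a $ j"
proof -
  have "(A ** L) $ i $ j = (\<Sum>k\<in>UNIV. A $ i $ k * L $ k $ j)"
    by (simp add: matrix_matrix_mult_def)
  also have "\<dots> = (\<Sum>k\<in>UNIV. if k = a then A $ i $ a * L $ a $ j else 0)"
    by (rule sum.cong) (auto simp: assms)
  finally show ?thesis by simp
qed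

lemma matrix_mult_row_supported_transpose_left:
  fixes A L :: "'a::comm_semiring_1 ^ 'n ^ 'n"
  assumes "\<And>v w. v \<noteq> a \<Longrightarrow> L $ v $ w = 0"
  shows "(transpose L ** A) $ i $ j = L $ a $ i * A $ a $ j"
proof -
  have "(transpose L ** A) $ i $ j = (\<Sum>k\<in>UNIV. L $ k $ i * A $ k $ j)"
    by (simp add: matrix_matrix_mult_def transpose_def)
  also have "\<dots> = (\<Sum>k\<in>UNIV. if k = a then L $ a $ i * A $ a $ j else 0)"
    by (rule sum.cong) (auto simp: assms)
  finally show ?thesis by simp
qed

lemma congruence_by_row_supported:
  fixes L Om :: "'a::comm_semiring_1 ^ 'n ^ 'n"
  assumes "\<And>v w. v \<noteq> a \<Longrightarrow> L $ v $ w = 0"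
  shows "(transpose (mat 1 + L) ** Om ** (mat 1 + L)) $ i $ j =
    Om $ i $ j + L $ a $ i * Om $ a $ j + Om $ i $ a * L $ a $ j + L $ a $ i * L $ a $ j * Om $ a $ a"
proof -
  have "transpose (mat 1 + L) ** Om ** (mat 1 + L) =
      Om + transpose L ** Om + Om ** L + transpose L ** Om ** L"
    by (simp add: transpose_add matrix_add_ldistrib matrix_add_rdistrib add.assoc)
  then show ?thesis
    by (simp add: matrix_mult_row_supported_right[OF assms]
        matrix_mult_row_supported_transpose_left[OF assms] mult_ac)
qed

lemma partial_cov_congruence_row_supported:
  fixes L Om S :: "'a::comm_ring_1 ^ 'n ^ 'n"
  assumes L: "\<And>v w. v \<noteq> a \<or> w = a \<Longrightarrow> L $ v $ w = 0"
    and Om_sym: "transpose Om = Om"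
    and Om_xy: "Om $ x $ y = 0"
    and S: "S = transpose (mat 1 + L) ** Om ** (mat 1 + L)"
  shows "S $ x $ y * S $ a $ a - S $ x $ a * S $ y $ a = - (Om $ x $ a * Om $ y $ a)"
proof -
  have "Om $ v $ w = Om $ w $ v" for v w
    using Om_sym by (metis transpose_def vec_lambda_beta)
  moreover have "L $ a $ a = 0"
    using L by simp
  moreover have row: "L $ v $ w = 0" if "v \<noteq> a" for v w
    using L that by blast
  moreover have "S $ i $ j = Om $ i $ j + L $ a $ i * Om $ a $ j + Om $ i $ a * L $ a $ j
      + L $ a $ i * L $ a $ j * Om $ a $ a" for i j
    unfolding S by (rule congruence_by_row_supported[OF row])
  ultimately show ?thesis
    using Om_xy by (simp add: algebra_simps)
qed

lemma model_G_partial_cov: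
  assumes "S \<in> model_G"
  obtains w :: "node \<Rightarrow> real" where
    "\<And>x y. x \<noteq> y \<Longrightarrow> x \<noteq> na \<Longrightarrow> y \<noteq> na \<Longrightarrow>
       S $ x $ y * S $ na $ na - S $ x $ na * S $ y $ na = - (w x * w y)"
proof -
  obtain L Om where L: "\<forall>v w. \<not> dir_edge v w \<longrightarrow> L $ v $ w = 0" and "pos_def Om"
    and Om_bi: "\<forall>v w. v \<noteq> w \<and> \<not> bi_edge v w \<longrightarrow> Om $ v $ w = 0"
    and S: "S = transpose (matrix_inv (mat 1 - L)) ** Om ** matrix_inv (mat 1 - L)"
    using assms unfolding model_G_def by blast
  have L_row: "L $ v $ w = 0" if "v \<noteq> na \<or> w = na" for v w
    using L that unfolding dir_edge_def by auto
  have S': "S = transpose (mat 1 + L) ** Om ** (mat 1 + L)"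
    using S matrix_inv_one_minus_nilpotent[OF matrix_square_zero_if_row_supported[OF L_row]]
    by simp
  have "transpose Om = Om"
    using \<open>pos_def Om\<close> unfolding pos_def_def by blast
  moreover have "Om $ x $ y = 0" if "x \<noteq> y" "x \<noteq> na" "y \<noteq> na" for x y
    using Om_bi that unfolding bi_edge_def by auto
  ultimately show ?thesis
    using partial_cov_congruence_row_supported[where a = na, OF L_row _ _ S']
    by (intro that[of "\<lambda>x. Om $ x $ na"]) blast
qed

lemma pcorr_triple_product_nonpos:
  fixes S :: mat4 and w :: "node \<Rightarrow> real"
  assumes "S $ x $ y * S $ a $ a - S $ x $ a * S $ y $ a = - (w x * w y)"
    and "S $ y $ z * S $ a $ a - S $ y $ a * S $ z $ a = - (w y * w z)"
    and "S $ x $ z * S $ a $ a - S $ x $ a * S $ z $ a = - (w x * w z)"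
  shows "pcorr S x y a * pcorr S y z a * pcorr S x z a \<le> 0"
proof -
  define cx cy cz where "cx = S $ x $ x * S $ a $ a - (S $ x $ a)^2"
    and "cy = S $ y $ y * S $ a $ a - (S $ y $ a)^2"
    and "cz = S $ z $ z * S $ a $ a - (S $ z $ a)^2"
  \<comment> \<open>single factors may be negative (\<open>sqrt\<close> is odd on \<open>real\<close>), but their product is not\<close>
  have denom: "sqrt (cx * cy) * sqrt (cy * cz) * sqrt (cx * cz) = sqrt ((cx * cy * cz)^2)"
    by (simp add: real_sqrt_mult[symmetric] power2_eq_square algebra_simps)
  have "pcorr S x y a * pcorr S y z a * pcorr S x z a =
      - ((w x * w y * w z)^2) / (sqrt (cx * cy) * sqrt (cy * cz) * sqrt (cx * cz))"
    unfolding pcorr_def assms cx_def cy_def cz_def by (simp add: power2_eq_square algebra_simps)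
  also have "\<dots> \<le> 0"
    unfolding denom by (simp add: divide_nonpos_nonneg)
  finally show ?thesis .
qed

lemma model_G_pcorr_triple_product_nonpos:
  assumes "S \<in> model_G"
  shows "pcorr S nb nc na * pcorr S nc nd na * pcorr S nb nd na \<le> 0"
proof -
  obtain w where w: "\<And>x y. x \<noteq> y \<Longrightarrow> x \<noteq> na \<Longrightarrow> y \<noteq> na \<Longrightarrow>
      S $ x $ y * S $ na $ na - S $ x $ na * S $ y $ na = - (w x * w y)"
    using model_G_partial_cov[OF assms] by blast
  show ?thesis
    by (intro pcorr_triple_product_nonpos[where w = w] w) simp_all
qed

lemma isCont_pcorr:
  assumes "(S $ x $ x * S $ a $ a - (S $ x $ a)^2) * (S $ y $ y * S $ a $ a - (S $ y $ a)^2) \<noteq> 0"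
  shows "isCont (\<lambda>T. pcorr T x y a) S"
  unfolding pcorr_def using assms by (intro continuous_intros) auto

lemma pos_def_Sigma0: "pos_def Sigma0"
  unfolding pos_def_def
proof (intro conjI allI impI)
  show "transpose Sigma0 = Sigma0"
    by (simp add: vec_eq_iff transpose_def Sigma0_def all_node)
  fix x :: "real ^ node"
  assume "x \<noteq> 0"
  then have "(x$na)^2 + (x$nb)^2 + (x$nc)^2 + (x$nd)^2 > 0"
    by (auto simp: vec_eq_iff all_node add_pos_nonneg add_nonneg_pos)
  then have "0 < ((x$na)^2 + (x$nb)^2 + (x$nc)^2 + (x$nd)^2)/2 + (x$na)^2/2 + (x$nb + x$nc + x$nd)^2/2"
    by (intro add_pos_nonneg) simp_all
  also have "\<dots> = x \<bullet> (Sigma0 *v x)"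
    by (simp add: inner_vec_def matrix_vector_mult_def Sigma0_def sum_UNIV_node
        power2_eq_square field_simps)
  finally show "x \<bullet> (Sigma0 *v x) > 0" .
qed

theorem proposition2:
  shows "(\<forall>S \<in> model_G. pcorr S nb nc na * pcorr S nc nd na * pcorr S nb nd na \<le> 0)
    \<and> (\<exists>U. openin (top_of_set {S. pos_def S}) U \<and> U \<noteq> {} \<and> Sigma0 \<in> U
         \<and> (\<forall>S \<in> U. pcorr S nb nc na * pcorr S nc nd na * pcorr S nb nd na > 0)
         \<and> U \<inter> model_G = {})"
proof -
  let ?f = "\<lambda>S. pcorr S nb nc na * pcorr S nc nd na * pcorr S nb nd na"
  have "isCont ?f Sigma0"
    by (intro continuous_intros isCont_pcorr) (simp_all add: Sigma0_def)
  moreover have "?f Sigma0 > 0"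
    by (simp add: pcorr_def Sigma0_def)
  ultimately obtain V where "open V" "Sigma0 \<in> V" and V: "\<forall>S\<in>V. ?f S > 0"
    using continuous_at_open[of Sigma0 ?f] by (meson greaterThan_iff open_greaterThan)
  let ?U = "{S. pos_def S} \<inter> V"
  have "openin (top_of_set {S. pos_def S}) ?U"
    using \<open>open V\<close> by (simp add: openin_open_Int)
  moreover have "?U \<inter> model_G = {}"
    using V model_G_pcorr_triple_product_nonpos by fastforce
  ultimately show ?thesis
    using model_G_pcorr_triple_product_nonpos V pos_def_Sigma0 \<open>Sigma0 \<in> V\<close> by blast
qed

end
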